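(* Let $\lambda$ be a partition of $n$. Then $\mathcal{I}_\lambda=\mathcal{M}_\lambda+\mathcal{E}_\lambda+\mathcal{K}_\lambda$, where $\mathcal{M}_\lambda$ is the ideal generated by all square-free monomials of degree $n-\lambda_1+1$ in $x_1,\dots,x_n$; $\mathcal{E}_\lambda$ is the ideal generated by $e_1(x_1,\dots,x_n),\dots,e_{\ell(\lambda)-1}(x_1,\dots,x_n)$; $\mathcal{K}_\lambda$ is the ideal generated by the elements of the sets $e_r(m)$, where $n-1\ge m\ge n-\lambda_1+1$ and $r$ is an entry of the regular filling of $\lambda$ lying in the same column as the entry $m$ (namely column $n-m$, whose bottom cell contains $m$) and strictly above it.
   Context: $k$ is a field of characteristic $0$ and $R=k[x_1,\dots,x_n]$. For a set $S$ of variables, $e_r(S)$ is the $r$-th elementary symmetric polynomial in the variables of $S$ ($e_0=1$, and $e_r(S)=0$ if $r>|S|$). For $1\le m\le n$, $e_r(m)$ denotes the set $\{e_r(S): S\subseteq\{x_1,\dots,x_n\},\ |S|=m\}$. A partition $\lambda=(\lambda_1\ge\lambda_2\ge\cdots)$ of $n$ has length $\ell(\lambda)$ (number of nonzero parts) and conjugate $\lambda'$ with $\lambda'_i=\#\{j:\lambda_j\ge i\}$. The Young diagram of $\lambda$ is drawn with rows counted from the bottom: the bottom row has $\lambda_1$ cells, the next $\lambda_2$, etc., left-justified; columns are numbered $0,1,\dots,\lambda_1-1$ from left to right, and column $c$ has height $\lambda'_{c+1}$. For $1\le m\le n$ put $\delta_m(\lambda)=\lambda'_n+\cdots+\lambda'_{n-m+1}$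 (with $\lambda'_i=0$ for $i>\lambda_1$). The De Concini–Procesi ideal $\mathcal{I}_\lambda\subseteq R$ is the ideal generated by all elements of the sets $e_r(m)$ with $1\le m\le n$ and $m\ge r>m-\delta_m(\lambda)$. The regular filling of $\lambda$: for each column $c$, the bottom cell of column $c$ receives $n-c$, and the remaining $\lambda'_{c+1}-1$ cells of column $c$ receive, from top to bottom, the consecutive integers $1+\sum_{d<c}(\lambda'_{d+1}-1),\dots,\sum_{d\le c}(\lambda'_{d+1}-1)$. *)

theory Defs
  imports Main "HOL-Library.Poly_Mapping"
begin

text \<open>Polynomials: finitely supported maps from monomials (exponent vectors nat =>0 nat)
  to coefficients.  The variable x_(i+1) of the paper is var i (i < n).\<close>

type_synonym 'k mpoly = "(nat \<Rightarrow>\<^sub>0 nat) \<Rightarrow>\<^sub>0 'k"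

definition var :: "nat \<Rightarrow> 'k::comm_ring_1 mpoly" where
  "var i = Poly_Mapping.single (Poly_Mapping.single i 1) 1"

definition polyring :: "nat \<Rightarrow> 'k::comm_ring_1 mpoly set" where
  "polyring n = {p. \<forall>mon \<in> Poly_Mapping.keys p. Poly_Mapping.keys mon \<subseteq> {..<n}}"

definition ideal_gen :: "nat \<Rightarrow> 'k::comm_ring_1 mpoly set \<Rightarrow> 'k mpoly set" where
  "ideal_gen n G = {\<Sum>g\<in>F. c g * g | F c. finite F \<and> F \<subseteq> G \<and> (\<forall>g\<in>F. c g \<in> polyring n)}"

definition ideal_sum :: "'k::comm_ring_1 mpoly set \<Rightarrow> 'k mpoly set \<Rightarrow> 'k mpoly set" where
  "ideal_sum I J = {a + b | a b. a \<in> I \<and> b \<in> J}"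

definition esym :: "nat \<Rightarrow> nat set \<Rightarrow> 'k::comm_ring_1 mpoly" where
  "esym r S = (\<Sum>T \<in> {T. T \<subseteq> S \<and> card T = r}. \<Prod>i\<in>T. var i)"

definition esym_set :: "nat \<Rightarrow> nat \<Rightarrow> nat \<Rightarrow> 'k::comm_ring_1 mpoly set" where
  "esym_set n r m = {esym r S | S. S \<subseteq> {..<n} \<and> card S = m}"

text \<open>Partitions as weakly decreasing lists of positive parts; part i (1-based) is lam ! (i-1).\<close>
definition is_partition :: "nat \<Rightarrow> nat list \<Rightarrow> bool" where
  "is_partition n lam \<longleftrightarrow> sorted_wrt (\<ge>) lam \<and> 0 \<notin> set lam \<and> sum_list lam = n"

definition part :: "nat list \<Rightarrow> nat \<Rightarrow> nat" where
  "part lam i = (if 1 \<le> i \<and> i \<le> length lam then lam ! (i - 1) else 0)"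

definition conj :: "nat list \<Rightarrow> nat \<Rightarrow> nat" where
  "conj lam i = card {j. 1 \<le> j \<and> j \<le> length lam \<and> part lam j \<ge> i}"

definition delta :: "nat \<Rightarrow> nat list \<Rightarrow> nat \<Rightarrow> nat" where
  "delta n lam m = (\<Sum>i = n - m + 1..n. conj lam i)"

definition DP_ideal :: "nat \<Rightarrow> nat list \<Rightarrow> 'k::comm_ring_1 mpoly set" where
  "DP_ideal n lam = ideal_gen n (\<Union> {esym_set n r m | r m.
      1 \<le> m \<and> m \<le> n \<and> r \<le> m \<and> int r > int m - int (delta n lam m)})"

text \<open>Regular filling: entry of the cell in column c (0-based from the left) at height j
  (j = 0 is the bottom cell), for j < conj lam (c+1).\<close>
definition filling :: "nat \<Rightarrow> nat list \<Rightarrow> nat \<Rightarrow> nat \<Rightarrow> nat" where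
  "filling n lam c j = (if j = 0 then n - c
     else (\<Sum>d<c. conj lam (d + 1) - 1) + (conj lam (c + 1) - j))"

definition M_ideal :: "nat \<Rightarrow> nat list \<Rightarrow> 'k::comm_ring_1 mpoly set" where
  "M_ideal n lam = ideal_gen n {\<Prod>i\<in>S. var i | S. S \<subseteq> {..<n} \<and> card S = n - part lam 1 + 1}"

definition E_ideal :: "nat \<Rightarrow> nat list \<Rightarrow> 'k::comm_ring_1 mpoly set" where
  "E_ideal n lam = ideal_gen n {esym r {..<n} | r. 1 \<le> r \<and> r \<le> length lam - 1}"

definition K_ideal :: "nat \<Rightarrow> nat list \<Rightarrow> 'k::comm_ring_1 mpoly set" where
  "K_ideal n lam = ideal_gen n (\<Union> {esym_set n r m | r m.
      n - part lam 1 + 1 \<le> m \<and> m \<le> n - 1 \<and>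
      (\<exists>j. 0 < j \<and> j < conj lam (n - m + 1) \<and> r = filling n lam (n - m) j)})"

end

theory Submission
  imports Defs
begin

text \<open>
  Every generator of \<open>\<M>\<^sub>\<lambda>\<close>, \<open>\<E>\<^sub>\<lambda>\<close> and \<open>\<K>\<^sub>\<lambda>\<close> is already a De Concini--Procesi
  generator, because the entries above the bottom cell of column \<open>n - m\<close> of the regular filling
  are exactly the \<open>r\<close> with \<open>m - \<delta>\<^sub>m < r < m - \<delta>\<^sub>m\<^sub>-\<^sub>1\<close>.
  Conversely take \<open>e\<^sub>r(S)\<close> with \<open>|S| = m\<close> and \<open>r > m - \<delta>\<^sub>m\<close>. If \<open>r = m\<close> it is a square-free monomial
  divisible by a generator of \<open>\<M>\<^sub>\<lambda>\<close>. If \<open>r > m - 1 - \<delta>\<^sub>m\<^sub>-\<^sub>1\<close>, the identity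
  \<open>\<Sum>\<^sub>x\<^sub>\<in>\<^sub>S e\<^sub>r(S - {x}) = (m - r) e\<^sub>r(S)\<close> and characteristic \<open>0\<close> reduce to \<open>m - 1\<close> variables.
  In the remaining case \<open>r\<close> lies in column \<open>n - m\<close> above \<open>m\<close>, so \<open>e\<^sub>r(S)\<close> generates
  \<open>\<K>\<^sub>\<lambda>\<close> if \<open>m < n\<close> and \<open>\<E>\<^sub>\<lambda>\<close> if \<open>m = n\<close>.
\<close>

subsection \<open>Ideals of the polynomial ring\<close>

lemma polyring_zero: "0 \<in> polyring n"
  unfolding polyring_def by simp

lemma polyring_one: "1 \<in> polyring n"
  unfolding polyring_def by auto

lemma polyring_const: "Poly_Mapping.single 0 a \<in> polyring n"
  unfolding polyring_def by auto

lemma polyring_var: "i < n \<Longrightarrow> var i \<in> polyring n"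
  unfolding polyring_def var_def by auto

lemma polyring_add: "p \<in> polyring n \<Longrightarrow> q \<in> polyring n \<Longrightarrow> p + q \<in> polyring n"
  using keys_add[of p q] unfolding polyring_def by blast

lemma polyring_mult:
  assumes "p \<in> polyring n" "q \<in> polyring n"
  shows "p * q \<in> polyring n"
  unfolding polyring_def
proof (intro CollectI ballI)
  fix mon assume "mon \<in> Poly_Mapping.keys (p * q)"
  then obtain a b where "mon = a + b" "a \<in> Poly_Mapping.keys p" "b \<in> Poly_Mapping.keys q"
    using keys_mult by blast
  with assms keys_add[of a b] show "Poly_Mapping.keys mon \<subseteq> {..<n}"
    unfolding polyring_def by blast
qed

lemma prod_var_in_polyring:
  assumes "S \<subseteq> {..<n}"
  shows "(\<Prod>i\<in>S. var i) \<in> polyring n"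
proof -
  have "finite S"
    using assms finite_subset by blast
  then show ?thesis
    using assms by (induction S rule: finite_induct) (auto intro: polyring_one polyring_mult polyring_var)
qed

definition is_poly_ideal :: "nat \<Rightarrow> 'k::comm_ring_1 mpoly set \<Rightarrow> bool" where
  "is_poly_ideal n I \<longleftrightarrow>
     0 \<in> I \<and> (\<forall>a\<in>I. \<forall>b\<in>I. a + b \<in> I) \<and> (\<forall>c\<in>polyring n. \<forall>a\<in>I. c * a \<in> I)"

lemma poly_ideal_add: "is_poly_ideal n I \<Longrightarrow> a \<in> I \<Longrightarrow> b \<in> I \<Longrightarrow> a + b \<in> I"
  unfolding is_poly_ideal_def by blast

lemma poly_ideal_mult: "is_poly_ideal n I \<Longrightarrow> c \<in> polyring n \<Longrightarrow> a \<in> I \<Longrightarrow> c * a \<in> I"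
  unfolding is_poly_ideal_def by blast

lemma poly_ideal_sum:
  assumes "is_poly_ideal n I" "\<And>x. x \<in> A \<Longrightarrow> f x \<in> I"
  shows "sum f A \<in> I"
proof (cases "finite A")
  case True
  then show ?thesis using assms(2)
    by (induction A rule: finite_induct) (use assms(1) in \<open>auto simp: is_poly_ideal_def\<close>)
qed (use assms(1) in \<open>simp add: is_poly_ideal_def\<close>)

lemma ideal_gen_generator: "g \<in> G \<Longrightarrow> g \<in> ideal_gen n G"
  unfolding ideal_gen_def
  by (intro CollectI exI[of _ "{g}"] exI[of _ "\<lambda>_. 1"]) (auto intro: polyring_one)

lemma ideal_gen_is_poly_ideal: "is_poly_ideal n (ideal_gen n (G :: 'k::comm_ring_1 mpoly set))"
  unfolding is_poly_ideal_def
proof (intro conjI ballI)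
  show "0 \<in> ideal_gen n G"
    unfolding ideal_gen_def by (intro CollectI exI[of _ "{}"]) auto
next
  fix a b assume "a \<in> ideal_gen n G" "b \<in> ideal_gen n G"
  then obtain F1 c1 F2 c2 where
    a: "a = (\<Sum>g\<in>F1. c1 g * g)" "finite F1" "F1 \<subseteq> G" "\<forall>g\<in>F1. c1 g \<in> polyring n" and
    b: "b = (\<Sum>g\<in>F2. c2 g * g)" "finite F2" "F2 \<subseteq> G" "\<forall>g\<in>F2. c2 g \<in> polyring n"
    unfolding ideal_gen_def by blast
  define d1 where "d1 g = (if g \<in> F1 then c1 g else 0)" for g
  define d2 where "d2 g = (if g \<in> F2 then c2 g else 0)" for g
  have fin: "finite (F1 \<union> F2)" using a b by simp
  have "a = (\<Sum>g\<in>F1 \<union> F2. d1 g * g)"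
    unfolding a(1) d1_def by (rule sum.mono_neutral_cong_left[OF fin]) auto
  moreover have "b = (\<Sum>g\<in>F1 \<union> F2. d2 g * g)"
    unfolding b(1) d2_def by (rule sum.mono_neutral_cong_left[OF fin]) auto
  ultimately have "a + b = (\<Sum>g\<in>F1 \<union> F2. (d1 g + d2 g) * g)"
    by (simp add: sum.distrib distrib_right)
  moreover have "\<forall>g\<in>F1 \<union> F2. d1 g + d2 g \<in> polyring n"
    using a(4) b(4) by (auto simp: d1_def d2_def intro!: polyring_add polyring_zero)
  ultimately show "a + b \<in> ideal_gen n G"
    unfolding ideal_gen_def using a(3) b(3) fin
    by (intro CollectI exI[of _ "F1 \<union> F2"] exI[of _ "\<lambda>g. d1 g + d2 g"]) auto
next
  fix p :: "'k mpoly" and a assume p: "p \<in> polyring n" and "a \<in> ideal_gen n G"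
  then obtain F c where a: "a = (\<Sum>g\<in>F. c g * g)" "finite F" "F \<subseteq> G" "\<forall>g\<in>F. c g \<in> polyring n"
    unfolding ideal_gen_def by blast
  have "p * a = (\<Sum>g\<in>F. (p * c g) * g)"
    unfolding a(1) by (simp add: sum_distrib_left mult.assoc)
  moreover have "\<forall>g\<in>F. p * c g \<in> polyring n"
    using a(4) p by (auto intro: polyring_mult)
  ultimately show "p * a \<in> ideal_gen n G"
    unfolding ideal_gen_def using a(2,3)
    by (intro CollectI exI[of _ F] exI[of _ "\<lambda>g. p * c g"]) auto
qed

lemma ideal_gen_least: "is_poly_ideal n I \<Longrightarrow> G \<subseteq> I \<Longrightarrow> ideal_gen n G \<subseteq> I"
  unfolding ideal_gen_def
  by (auto intro!: poly_ideal_sum poly_ideal_mult)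

lemma ideal_sum_is_poly_ideal:
  fixes I J :: "'k::comm_ring_1 mpoly set"
  assumes I: "is_poly_ideal n I" and J: "is_poly_ideal n J"
  shows "is_poly_ideal n (ideal_sum I J)"
  unfolding is_poly_ideal_def
proof (intro conjI ballI)
  have "(0 :: 'k mpoly) = 0 + 0" by simp
  then show "0 \<in> ideal_sum I J"
    using I J unfolding is_poly_ideal_def ideal_sum_def by blast
next
  fix x y assume "x \<in> ideal_sum I J" "y \<in> ideal_sum I J"
  then obtain a1 b1 a2 b2 where "x = a1 + b1" "y = a2 + b2" "a1 \<in> I" "a2 \<in> I" "b1 \<in> J" "b2 \<in> J"
    unfolding ideal_sum_def by blast
  then show "x + y \<in> ideal_sum I J"
    unfolding ideal_sum_def
    by (intro CollectI exI[of _ "a1 + a2"] exI[of _ "b1 + b2"])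
      (simp add: algebra_simps poly_ideal_add[OF I] poly_ideal_add[OF J])
next
  fix c :: "'k mpoly" and x assume c: "c \<in> polyring n" and "x \<in> ideal_sum I J"
  then obtain a b where "x = a + b" "a \<in> I" "b \<in> J"
    unfolding ideal_sum_def by blast
  then show "c * x \<in> ideal_sum I J"
    unfolding ideal_sum_def
    by (intro CollectI exI[of _ "c * a"] exI[of _ "c * b"])
      (simp add: distrib_left poly_ideal_mult[OF I c] poly_ideal_mult[OF J c])
qed

lemma ideal_sum_upper1:
  assumes "is_poly_ideal n J"
  shows "I \<subseteq> ideal_sum I J"
proof
  fix a assume "a \<in> I"
  moreover have "a = a + 0" by simp
  ultimately show "a \<in> ideal_sum I J"
    using assms unfolding is_poly_ideal_def ideal_sum_def by blast
qed

lemma ideal_sum_upper2: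
  assumes "is_poly_ideal n I"
  shows "J \<subseteq> ideal_sum I J"
proof
  fix b assume "b \<in> J"
  moreover have "b = 0 + b" by simp
  ultimately show "b \<in> ideal_sum I J"
    using assms unfolding is_poly_ideal_def ideal_sum_def by blast
qed

lemma ideal_sum_least: "is_poly_ideal n K \<Longrightarrow> I \<subseteq> K \<Longrightarrow> J \<subseteq> K \<Longrightarrow> ideal_sum I J \<subseteq> K"
  unfolding is_poly_ideal_def ideal_sum_def by blast

lemma poly_ideal_of_nat_mult_cancel:
  fixes p :: "'k::field_char_0 mpoly"
  assumes I: "is_poly_ideal n I" and "0 < k" and kp: "of_nat k * p \<in> I"
  shows "p \<in> I"
proof -
  have "Poly_Mapping.single 0 (inverse (of_nat k)) * (of_nat k :: 'k mpoly)
      = Poly_Mapping.single 0 (inverse (of_nat k)) * Poly_Mapping.single 0 (of_nat k)"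
    by simp
  also have "\<dots> = Poly_Mapping.single 0 (inverse (of_nat k) * of_nat k)"
    by (simp only: mult_single add_0_right)
  also have "\<dots> = 1"
    using \<open>0 < k\<close> by simp
  finally have inv: "Poly_Mapping.single 0 (inverse (of_nat k)) * (of_nat k :: 'k mpoly) = 1" .
  have "p = Poly_Mapping.single 0 (inverse (of_nat k)) * (of_nat k * p)"
    by (simp only: mult.assoc[symmetric] inv mult_1_left)
  also have "\<dots> \<in> I"
    using poly_ideal_mult[OF I polyring_const kp] .
  finally show ?thesis .
qed

subsection \<open>Elementary symmetric polynomials\<close>

lemma esym_card_self:
  assumes "finite S"
  shows "esym (card S) S = (\<Prod>i\<in>S. var i)"
proof -
  have "{T. T \<subseteq> S \<and> card T = card S} = {S}"
    using assms card_subset_eq by auto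
  then show ?thesis
    unfolding esym_def by simp
qed

lemma sum_esym_delete:
  assumes "finite S"
  shows "(\<Sum>x\<in>S. esym r (S - {x}) :: 'k::comm_ring_1 mpoly) = of_nat (card S - r) * esym r S"
proof -
  define A where "A = {T. T \<subseteq> S \<and> card T = r}"
  define P :: "nat set \<Rightarrow> 'k mpoly" where "P T = (\<Prod>i\<in>T. var i)" for T
  have finA: "finite A"
    using assms unfolding A_def by simp
  have "(\<Sum>x\<in>S. esym r (S - {x})) = (\<Sum>x\<in>S. \<Sum>T\<in>A. if x \<notin> T then P T else 0)"
  proof (rule sum.cong[OF refl])
    fix x
    have "{T. T \<subseteq> S - {x} \<and> card T = r} = A \<inter> {T. x \<notin> T}"
      unfolding A_def by blast
    then show "esym r (S - {x}) = (\<Sum>T\<in>A. if x \<notin> T then P T else 0)"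
      unfolding esym_def P_def by (simp add: sum.inter_restrict[OF finA])
  qed
  also have "\<dots> = (\<Sum>T\<in>A. \<Sum>x\<in>S. if x \<notin> T then P T else 0)"
    by (rule sum.swap)
  also have "\<dots> = (\<Sum>T\<in>A. of_nat (card S - r) * P T)"
  proof (rule sum.cong[OF refl])
    fix T assume "T \<in> A"
    then have "T \<subseteq> S" "card T = r"
      unfolding A_def by auto
    then have "card (S - T) = card S - r"
      using assms by (simp add: card_Diff_subset finite_subset)
    moreover have "S \<inter> {x. x \<notin> T} = S - T"
      by blast
    ultimately show "(\<Sum>x\<in>S. if x \<notin> T then P T else 0) = of_nat (card S - r) * P T"
      using sum.inter_restrict[OF assms, of "\<lambda>_. P T" "{x. x \<notin> T}"] by simp
  qed
  also have "\<dots> = of_nat (card S - r) * esym r S"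
    unfolding esym_def A_def P_def by (simp add: sum_distrib_left)
  finally show ?thesis .
qed

lemma esym_mem_of_deletions:
  fixes I :: "'k::field_char_0 mpoly set"
  assumes I: "is_poly_ideal n I" and S: "finite S" "r < card S"
    and deletions: "\<And>x. x \<in> S \<Longrightarrow> esym r (S - {x}) \<in> I"
  shows "esym r S \<in> I"
proof (rule poly_ideal_of_nat_mult_cancel[OF I])
  show "0 < card S - r" using S by simp
  have "(\<Sum>x\<in>S. esym r (S - {x})) \<in> I"
    by (rule poly_ideal_sum[OF I deletions])
  then show "of_nat (card S - r) * esym r S \<in> I"
    by (simp only: sum_esym_delete[OF S(1)])
qed

lemma prod_var_mem_M_ideal:
  assumes S: "S \<subseteq> {..<n}" "n - part lam 1 + 1 \<le> card S"
  shows "(\<Prod>i\<in>S. var i) \<in> M_ideal n lam"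
proof -
  obtain T where T: "T \<subseteq> S" "card T = n - part lam 1 + 1"
    using obtain_subset_with_card_n[OF S(2)] by metis
  have "(\<Prod>i\<in>S. var i) = (\<Prod>i\<in>S - T. var i) * (\<Prod>i\<in>T. var i)"
    using S(1) T(1) by (intro prod.subset_diff) (auto intro: finite_subset)
  also have "\<dots> \<in> M_ideal n lam"
    unfolding M_ideal_def
  proof (rule poly_ideal_mult[OF ideal_gen_is_poly_ideal])
    show "(\<Prod>i\<in>S - T. var i) \<in> polyring n"
      using S(1) by (intro prod_var_in_polyring) auto
    show "(\<Prod>i\<in>T. var i) \<in> ideal_gen n {\<Prod>i\<in>S. var i |S. S \<subseteq> {..<n} \<and> card S = n - part lam 1 + 1}"
      using S(1) T by (intro ideal_gen_generator) blast
  qed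
  finally show ?thesis .
qed

lemma esym_mem_DP_ideal:
  assumes "S \<subseteq> {..<n}" "card S = m" "1 \<le> m" "m \<le> n" "r \<le> m"
    and "int m - int (delta n lam m) < int r"
  shows "esym r S \<in> DP_ideal n lam"
proof -
  have "esym r S \<in> esym_set n r m"
    unfolding esym_set_def using assms(1,2) by blast
  then show ?thesis
    unfolding DP_ideal_def using assms(3-6) by (intro ideal_gen_generator) blast
qed

lemma DP_ideal_is_poly_ideal: "is_poly_ideal n (DP_ideal n lam)"
  unfolding DP_ideal_def by (rule ideal_gen_is_poly_ideal)

subsection \<open>Partitions and the regular filling\<close>

locale partition_of =
  fixes n :: nat and lam :: "nat list"
  assumes is_partition: "is_partition n lam" and n_pos: "1 \<le> n"
begin

lemma lam_nonempty: "lam \<noteq> []"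
  using is_partition n_pos unfolding is_partition_def by auto

lemma part_le_first: "part lam j \<le> part lam 1"
proof (cases "2 \<le> j \<and> j \<le> length lam")
  case True
  then have "lam ! (j - 1) \<le> lam ! 0"
    using is_partition sorted_wrt_nth_less[of "(\<ge>)" lam 0 "j - 1"]
    unfolding is_partition_def by auto
  then show ?thesis
    using True unfolding part_def by simp
qed (auto simp: part_def)

lemma part_pos:
  assumes "1 \<le> j" "j \<le> length lam"
  shows "0 < part lam j"
proof -
  have "lam ! (j - 1) \<in> set lam"
    using assms by simp
  then have "lam ! (j - 1) \<noteq> 0"
    using is_partition unfolding is_partition_def by metis
  then show ?thesis
    using assms unfolding part_def by simp
qed

lemma part_le_n: "part lam j \<le> n"
  using is_partition unfolding part_def is_partition_def by (auto intro: elem_le_sum_list)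

lemma first_part_pos: "0 < part lam 1"
  using part_pos[of 1] lam_nonempty by (simp add: Suc_leI)

lemma conj_pos: "i \<le> part lam 1 \<Longrightarrow> 0 < conj lam i"
  unfolding conj_def using lam_nonempty
  by (intro card_gt_0_iff[THEN iffD2]) (auto intro!: exI[of _ 1] simp: Suc_leI)

lemma conj_eq_0:
  assumes "part lam 1 < i"
  shows "conj lam i = 0"
proof -
  have "\<not> i \<le> part lam j" for j
    using assms part_le_first[of j] by linarith
  then show ?thesis
    unfolding conj_def by simp
qed

lemma conj_1: "conj lam 1 = length lam"
proof -
  have "{j. 1 \<le> j \<and> j \<le> length lam \<and> 1 \<le> part lam j} = {1..length lam}"
    using part_pos by (auto simp: Suc_leI)
  then show ?thesis
    unfolding conj_def by simp
qed

lemma sum_conj: "(\<Sum>i=1..n. conj lam i) = n"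
proof -
  have "(\<Sum>i=1..n. conj lam i) = (\<Sum>i=1..n. \<Sum>j=1..length lam. if i \<le> part lam j then 1 else 0)"
    unfolding conj_def by (intro sum.cong) (auto simp: sum.If_cases Int_def conj_ac)
  also have "\<dots> = (\<Sum>j=1..length lam. \<Sum>i=1..n. if i \<le> part lam j then 1 else 0)"
    by (rule sum.swap)
  also have "\<dots> = (\<Sum>j=1..length lam. part lam j)"
  proof (rule sum.cong[OF refl])
    fix j
    have "{1..n} \<inter> {i. i \<le> part lam j} = {1..part lam j}"
      using part_le_n[of j] by auto
    then show "(\<Sum>i=1..n. if i \<le> part lam j then 1 else 0) = part lam j"
      by (simp add: sum.If_cases Int_def)
  qed
  also have "\<dots> = (\<Sum>j<length lam. lam ! j)"
    unfolding sum.atLeast1_atMost_eq[where g = "part lam", simplified One_nat_def[symmetric]]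
    by (rule sum.cong) (auto simp: part_def)
  also have "\<dots> = n"
    using is_partition unfolding is_partition_def by (simp add: sum_list_sum_nth atLeast0LessThan)
  finally show ?thesis .
qed

lemma delta_0: "delta n lam 0 = 0"
  unfolding delta_def by simp

lemma delta_n: "delta n lam n = n"
  unfolding delta_def using sum_conj by simp

lemma delta_step:
  assumes "1 \<le> m" "m \<le> n"
  shows "delta n lam m = delta n lam (m - 1) + conj lam (n - m + 1)"
proof -
  have "delta n lam m = conj lam (n - m + 1) + (\<Sum>i = Suc (n - m + 1)..n. conj lam i)"
    unfolding delta_def by (rule sum.atLeast_Suc_atMost) (use assms in auto)
  moreover have "Suc (n - m + 1) = n - (m - 1) + 1"
    using assms by auto
  ultimately show ?thesis
    unfolding delta_def by simp
qed

lemma delta_add_sum_conj: "m \<le> n \<Longrightarrow> delta n lam m + (\<Sum>i=1..n-m. conj lam i) = n"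
proof (induction m)
  case 0
  then show ?case using delta_0 sum_conj by simp
next
  case (Suc m)
  then have "n - m = Suc (n - Suc m)"
    by auto
  then show ?case
    using Suc delta_step[of "Suc m"] by simp
qed

lemma delta_pos_imp_less_first_part:
  assumes "0 < delta n lam m"
  shows "n - m < part lam 1"
proof (rule ccontr)
  assume "\<not> n - m < part lam 1"
  then have "conj lam i = 0" if "n - m + 1 \<le> i" for i
    using that by (intro conj_eq_0) simp
  then have "delta n lam m = 0"
    unfolding delta_def by (intro sum.neutral) auto
  with assms show False
    by simp
qed

text \<open>
  The first entry written into column \<open>c = n - m\<close> of the regular filling is one more than the
  number of non-bottom cells in the columns to its left, and that number is \<open>m - \<delta>\<^sub>m\<close>.
\<close>

lemma filling_offset_add_delta:
  assumes "m \<le> n" "n - m \<le> part lam 1"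
  shows "(\<Sum>d<n-m. conj lam (d + 1) - 1) + delta n lam m = m"
proof -
  have "(\<Sum>d<n-m. conj lam (d + 1) - 1) + (n - m) = (\<Sum>d<n-m. conj lam (d + 1) - 1 + 1)"
    by (simp only: sum.distrib card_lessThan sum_constant mult_1_right of_nat_id)
  also have "\<dots> = (\<Sum>d<n-m. conj lam (d + 1))"
    using assms(2) conj_pos by (intro sum.cong) (auto simp: Suc_leI)
  also have "\<dots> = (\<Sum>i=1..n-m. conj lam i)"
    by (simp add: sum.atLeast1_atMost_eq)
  finally show ?thesis
    using delta_add_sum_conj[OF assms(1)] assms(1) by linarith
qed

lemma filling_column_entries:
  assumes m: "1 \<le> m" "m \<le> n"
  shows "(\<exists>j. 0 < j \<and> j < conj lam (n - m + 1) \<and> r = filling n lam (n - m) j)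
    \<longleftrightarrow> int m - int (delta n lam m) < int r \<and> int r < int m - int (delta n lam (m - 1))"
proof (cases "n - m < part lam 1")
  case True
  define s where "s = (\<Sum>d<n-m. conj lam (d + 1) - 1)"
  define h where "h = conj lam (n - m + 1)"
  have offset: "s + delta n lam m = m"
    unfolding s_def using filling_offset_add_delta m True by simp
  have step: "delta n lam m = delta n lam (m - 1) + h"
    unfolding h_def by (rule delta_step[OF m])
  have fill: "filling n lam (n - m) j = s + (h - j)" if "j \<noteq> 0" for j
    using that unfolding filling_def s_def h_def by simp
  show ?thesis
  proof
    assume "\<exists>j. 0 < j \<and> j < conj lam (n - m + 1) \<and> r = filling n lam (n - m) j"
    then obtain j where "0 < j" "j < h" "r = s + (h - j)"
      using fill unfolding h_def[symmetric] by auto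
    then show "int m - int (delta n lam m) < int r \<and> int r < int m - int (delta n lam (m - 1))"
      using offset step by linarith
  next
    assume "int m - int (delta n lam m) < int r \<and> int r < int m - int (delta n lam (m - 1))"
    then have "0 < s + h - r" "s + h - r < h" "r = s + (h - (s + h - r))"
      using offset step by linarith+
    then show "\<exists>j. 0 < j \<and> j < conj lam (n - m + 1) \<and> r = filling n lam (n - m) j"
      using fill unfolding h_def[symmetric] by (intro exI[of _ "s + h - r"]) auto
  qed
next
  case False
  then have "conj lam (n - m + 1) = 0"
    by (intro conj_eq_0) simp
  then show ?thesis
    using delta_step[OF m] by simp
qed

end

subsection \<open>The two inclusions\<close>

context partition_of
begin

lemma M_ideal_subset_DP_ideal: "M_ideal n lam \<subseteq> DP_ideal n lam"
  unfolding M_ideal_def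
proof (rule ideal_gen_least[OF DP_ideal_is_poly_ideal], rule subsetI)
  fix g assume "g \<in> {\<Prod>i\<in>S. var i | S. S \<subseteq> {..<n} \<and> card S = n - part lam 1 + 1}"
  then obtain S where S: "g = (\<Prod>i\<in>S. var i)" "S \<subseteq> {..<n}" "card S = n - part lam 1 + 1"
    by blast
  define m where "m = n - part lam 1 + 1"
  have m: "1 \<le> m" "m \<le> n" "n - m + 1 = part lam 1"
    using first_part_pos part_le_n[of 1] unfolding m_def by auto
  have "0 < conj lam (part lam 1)"
    by (rule conj_pos) simp
  then have "0 < delta n lam m"
    using delta_step[OF m(1,2)] m(3) by simp
  moreover have "g = esym m S"
    unfolding S(1) m_def S(3)[symmetric] using finite_subset[OF S(2)] by (simp add: esym_card_self)
  ultimately show "g \<in> DP_ideal n lam"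
    using S m unfolding m_def by (auto intro!: esym_mem_DP_ideal)
qed

lemma E_ideal_subset_DP_ideal: "E_ideal n lam \<subseteq> DP_ideal n lam"
  unfolding E_ideal_def
proof (rule ideal_gen_least[OF DP_ideal_is_poly_ideal], rule subsetI)
  fix g assume "g \<in> {esym r {..<n} | r. 1 \<le> r \<and> r \<le> length lam - 1}"
  then obtain r where g: "g = esym r {..<n}" "1 \<le> r" "r \<le> length lam - 1"
    by blast
  have "length lam \<le> n"
    using delta_step[of n] n_pos delta_n conj_1 by simp
  then show "g \<in> DP_ideal n lam"
    using g n_pos delta_n by (auto intro!: esym_mem_DP_ideal[of _ n])
qed

lemma K_ideal_subset_DP_ideal: "K_ideal n lam \<subseteq> DP_ideal n lam"
  unfolding K_ideal_def
proof (rule ideal_gen_least[OF DP_ideal_is_poly_ideal], rule subsetI)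
  fix g assume "g \<in> \<Union> {esym_set n r m | r m. n - part lam 1 + 1 \<le> m \<and> m \<le> n - 1 \<and>
      (\<exists>j. 0 < j \<and> j < conj lam (n - m + 1) \<and> r = filling n lam (n - m) j)}"
  then obtain r m S where g: "g = esym r S" "S \<subseteq> {..<n}" "card S = m"
    and m: "n - part lam 1 + 1 \<le> m" "m \<le> n - 1"
    and r: "\<exists>j. 0 < j \<and> j < conj lam (n - m + 1) \<and> r = filling n lam (n - m) j"
    unfolding esym_set_def by blast
  have m1: "1 \<le> m" "m \<le> n"
    using m part_le_n[of 1] by auto
  have "int m - int (delta n lam m) < int r" "int r < int m - int (delta n lam (m - 1))"
    using r filling_column_entries[OF m1] by auto
  then show "g \<in> DP_ideal n lam"
    using g m1 by (auto intro!: esym_mem_DP_ideal)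
qed

lemma esym_mem_E_or_K_ideal:
  assumes S: "S \<subseteq> {..<n}" "card S = m" and m: "1 \<le> m" "m \<le> n"
    and r: "int m - int (delta n lam m) < int r" "int r < int m - int (delta n lam (m - 1))"
  shows "esym r S \<in> E_ideal n lam \<union> K_ideal n lam"
proof (cases "m = n")
  case True
  then have Sn: "S = {..<n}"
    using S by (simp add: card_subset_eq)
  have "delta n lam (n - 1) + length lam = n"
    using delta_step[of n] n_pos delta_n conj_1 by simp
  moreover have "0 < int r" "int r < int n - int (delta n lam (n - 1))"
    using r delta_n True by simp_all
  ultimately have "1 \<le> r" "r \<le> length lam - 1"
    by linarith+
  then show ?thesis
    unfolding E_ideal_def Sn by (intro UnI1 ideal_gen_generator) blast
next
  case False
  obtain j where j: "0 < j" "j < conj lam (n - m + 1)" "r = filling n lam (n - m) j"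
    using filling_column_entries[OF m] r by blast
  then have "n - m < part lam 1"
    using conj_eq_0[of "n - m + 1"] by (cases "n - m < part lam 1") auto
  then have "n - part lam 1 + 1 \<le> m" "m \<le> n - 1"
    using m False by auto
  then have "esym_set n r m \<in> {esym_set n r m | r m. n - part lam 1 + 1 \<le> m \<and> m \<le> n - 1 \<and>
      (\<exists>j. 0 < j \<and> j < conj lam (n - m + 1) \<and> r = filling n lam (n - m) j)}"
    using j by blast
  moreover have "esym r S \<in> esym_set n r m"
    unfolding esym_set_def using S by blast
  ultimately show ?thesis
    unfolding K_ideal_def by (intro UnI2 ideal_gen_generator UnionI)
qed

lemma esym_mem_ideal_containing_MEK:
  fixes J :: "'k::field_char_0 mpoly set"
  assumes J: "is_poly_ideal n J" "M_ideal n lam \<subseteq> J" "E_ideal n lam \<subseteq> J" "K_ideal n lam \<subseteq> J"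
  shows "m \<le> n \<Longrightarrow> S \<subseteq> {..<n} \<Longrightarrow> card S = m \<Longrightarrow> r \<le> m
    \<Longrightarrow> int m - int (delta n lam m) < int r \<Longrightarrow> esym r S \<in> J"
proof (induction m arbitrary: S r)
  case 0
  then show ?case
    using delta_0 by simp
next
  case (Suc m)
  have finS: "finite S"
    using Suc.prems(2) finite_subset by blast
  consider "r = Suc m" | "r \<le> m" "int m - int (delta n lam m) < int r"
    | "int r < int (Suc m) - int (delta n lam m)"
    using Suc.prems(4) by linarith
  then show ?case
  proof cases
    case 1
    then have "n - Suc m < part lam 1"
      using Suc.prems(5) by (intro delta_pos_imp_less_first_part) linarith
    then have "(\<Prod>i\<in>S. var i :: 'k mpoly) \<in> M_ideal n lam"
      using Suc.prems by (intro prod_var_mem_M_ideal) auto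
    moreover have "esym r S = (\<Prod>i\<in>S. var i :: 'k mpoly)"
      using esym_card_self[OF finS] 1 Suc.prems(3) by simp
    ultimately show ?thesis
      using J(2) by auto
  next
    case 2
    have "esym r (S - {x}) \<in> J" if "x \<in> S" for x
      using Suc.IH[of "S - {x}" r] Suc.prems that 2 finS by auto
    then show ?thesis
      using esym_mem_of_deletions[OF J(1) finS] 2 Suc.prems(3) by simp
  next
    case 3
    then have "esym r S \<in> E_ideal n lam \<union> K_ideal n lam"
      using Suc.prems by (intro esym_mem_E_or_K_ideal) auto
    then show ?thesis
      using J(3,4) by blast
  qed
qed

lemma DP_ideal_subset:
  fixes J :: "'k::field_char_0 mpoly set"
  assumes "is_poly_ideal n J" "M_ideal n lam \<subseteq> J" "E_ideal n lam \<subseteq> J" "K_ideal n lam \<subseteq> J"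
  shows "DP_ideal n lam \<subseteq> J"
  unfolding DP_ideal_def
proof (rule ideal_gen_least[OF assms(1)], rule subsetI)
  fix g :: "'k mpoly" assume "g \<in> \<Union> {esym_set n r m | r m.
      1 \<le> m \<and> m \<le> n \<and> r \<le> m \<and> int r > int m - int (delta n lam m)}"
  then obtain r m S where "g = esym r S" "S \<subseteq> {..<n}" "card S = m" "m \<le> n" "r \<le> m"
      "int m - int (delta n lam m) < int r"
    unfolding esym_set_def by blast
  then show "g \<in> J"
    using esym_mem_ideal_containing_MEK[OF assms] by blast
qed

end

theorem mainTheorem4:
  fixes n :: nat and lam :: "nat list"
  assumes "1 \<le> n" and "is_partition n lam"
  shows "(DP_ideal n lam :: 'k::field_char_0 mpoly set)
           = ideal_sum (ideal_sum (M_ideal n lam) (E_ideal n lam)) (K_ideal n lam)"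
proof -
  interpret partition_of n lam
    using assms by unfold_locales
  let ?M = "M_ideal n lam :: 'k mpoly set" and ?E = "E_ideal n lam" and ?K = "K_ideal n lam"
  have ideals: "is_poly_ideal n ?M" "is_poly_ideal n ?E" "is_poly_ideal n ?K"
    unfolding M_ideal_def E_ideal_def K_ideal_def by (rule ideal_gen_is_poly_ideal)+
  have ME: "is_poly_ideal n (ideal_sum ?M ?E)"
    by (rule ideal_sum_is_poly_ideal[OF ideals(1,2)])
  have "?M \<subseteq> ideal_sum ?M ?E" "?E \<subseteq> ideal_sum ?M ?E"
    "ideal_sum ?M ?E \<subseteq> ideal_sum (ideal_sum ?M ?E) ?K" "?K \<subseteq> ideal_sum (ideal_sum ?M ?E) ?K"
    by (rule ideal_sum_upper1 ideal_sum_upper2, fact)+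
  then have "DP_ideal n lam \<subseteq> ideal_sum (ideal_sum ?M ?E) ?K"
    by (intro DP_ideal_subset ideal_sum_is_poly_ideal[OF ME ideals(3)]) blast+
  moreover have "ideal_sum (ideal_sum ?M ?E) ?K \<subseteq> DP_ideal n lam"
    using M_ideal_subset_DP_ideal E_ideal_subset_DP_ideal K_ideal_subset_DP_ideal
    by (intro ideal_sum_least[OF DP_ideal_is_poly_ideal])
  ultimately show ?thesis
    by (rule subset_antisym)
qed

end
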